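(* Let $r\ge 1$ be an integer, $\mathcal{C}_0 \subseteq \mathbb{F}_2^d$ a linear code with relative distance $\delta$ and $r$'th relative generalized distance $\delta_r$, $G=(L\cup R,E)$ the double cover of a $d$-regular graph on $n$ vertices with expansion $\lambda$, $\varepsilon>0$ with $\frac{\lambda}{d} \leq \frac{\varepsilon^2\delta^2}{2^{r+4}}$, and $z \in (\mathbb{F}_2\cup\{\bot\})^E$ with at most $(1-\varepsilon)\delta\delta_r dn$ coordinates equal to $\bot$. Let $E' \subseteq E$ be the edge set produced by the procedure \textsc{FindHeavyEdges} described in the context, and consider the global equivalence relation $\sim$ on $E'$. Then every global equivalence class in $E'$ has size at least $\frac{\varepsilon^4\delta^4}{2^{2r+7}} dn$. In particular, $E'$ is partitioned into at most $s := \frac{2^{2r+7}}{\varepsilon^4\delta^4}$ equivalence classes.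
   Context: Relative distance of a linear code: minimum relative weight of a nonzero codeword; $r$'th relative generalized distance of $\mathcal{C}_0 \subseteq \mathbb{F}_2^d$: $\frac1d\min_V|\{i:\exists v\in V, v_i\ne 0\}|$ over $r$-dimensional subspaces $V\subseteq\mathcal{C}_0$. For $w\in(\mathbb{F}_2\cup\{\bot\})^d$, $\mathrm{List}_{\mathcal{C}_0}(w)=\{c\in\mathcal{C}_0: c_i=w_i \text{ whenever } w_i\ne\bot\}$. Expansion of a $d$-regular graph: $\max\{\lambda_2,|\lambda_n|\}$ of its adjacency eigenvalues; its double cover $G=(L\cup R,E)$ has $L,R$ copies of the vertex set with $u\in L$, $v\in R$ adjacent iff they are adjacent in the original graph. Fix for each vertex $v$ an ordering $\Gamma_1(v),\dots,\Gamma_d(v)$ of its neighbours. Let $B\subseteq L\cup R$ be the set of vertices $v$ with $z_{(v,u)}=\bot$ for more than $\delta_r d$ neighbours $u$. For $v\notin B$, let $L_v=\mathrm{List}_{\mathcal{C}_0}((z_{(v,\Gamma_1(v))},\dots,z_{(v,\Gamma_d(v))}))$; it is an affine subspace of $\mathbb{F}_2^d$ of some dimension $r_v\le r-1$, and fix $G_v\in\mathbb{F}_2^{d\times r_v}$, $b_v\in\mathbb{F}_2^d$ with $L_v=\{G_vx+b_v: x\in\mathbb{F}_2^{r_v}\}$; the rows of $G_v$ are indexed by the edges incident to $v$. Local equivalence: for $v\notin B$ and edges $(u,v),(w,v)$, write $(u,v)\sim_v(w,v)$ if the rows of $G_v$ indexed by these edges are equal. \textsc{FindHeavyEdges}: start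 with $E'=E$; remove from $E'$ all edges incident to a vertex of $B$; then, as long as there exist an edge $(u,v)\in E'$ (with $v$ either endpoint) such that $|\{(w,v)\in E' : (w,v)\sim_v(u,v)\}| \le \frac{\varepsilon^2\delta^2}{2^{r+3}} d$, remove $(u,v)$ and all $(w,v)\in E'$ with $(w,v)\sim_v(u,v)$ from $E'$; output the final $E'$. Global equivalence: for $e,e'\in E'$, $e\sim e'$ if there is a sequence $e=e_1,\dots,e_t=e'$ of edges in $E'$ such that each consecutive pair $e_i=(u,v)$, $e_{i+1}=(v,w)$ shares a vertex $v$ and satisfies $(u,v)\sim_v(v,w)$. *)

theory Defs
  imports "HOL-Computational_Algebra.Computational_Algebra" "Jordan_Normal_Form.Char_Poly"
begin

text \<open>Words of F_2^d are functions nat => bool vanishing outside {0..<d};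
  addition in F_2 is xor, i.e. (~=) on bool.\<close>

definition words :: "nat \<Rightarrow> (nat \<Rightarrow> bool) set" where
  "words d = {c. \<forall>i\<ge>d. \<not> c i}"

definition zero_word :: "nat \<Rightarrow> bool" where
  "zero_word = (\<lambda>_. False)"

definition add_word :: "(nat \<Rightarrow> bool) \<Rightarrow> (nat \<Rightarrow> bool) \<Rightarrow> (nat \<Rightarrow> bool)" where
  "add_word c c' = (\<lambda>i. c i \<noteq> c' i)"

definition f2_subspace :: "nat \<Rightarrow> (nat \<Rightarrow> bool) set \<Rightarrow> bool" where
  "f2_subspace d V \<longleftrightarrow> V \<subseteq> words d \<and> zero_word \<in> V \<and>
     (\<forall>c\<in>V. \<forall>c'\<in>V. add_word c c' \<in> V)"

abbreviation linear_code :: "nat \<Rightarrow> (nat \<Rightarrow> bool) set \<Rightarrow> bool" where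
  "linear_code d C \<equiv> f2_subspace d C"

text \<open>An F_2-subspace has dimension k iff it has exactly 2^k elements.\<close>
definition f2_dim_eq :: "nat \<Rightarrow> (nat \<Rightarrow> bool) set \<Rightarrow> nat \<Rightarrow> bool" where
  "f2_dim_eq d V k \<longleftrightarrow> f2_subspace d V \<and> card V = 2 ^ k"

definition supp :: "nat \<Rightarrow> (nat \<Rightarrow> bool) \<Rightarrow> nat set" where
  "supp d c = {i. i < d \<and> c i}"

definition rel_dist :: "nat \<Rightarrow> (nat \<Rightarrow> bool) set \<Rightarrow> real" where
  "rel_dist d C = Min {real (card (supp d c)) / real d | c. c \<in> C \<and> c \<noteq> zero_word}"

definition rel_gen_dist :: "nat \<Rightarrow> nat \<Rightarrow> (nat \<Rightarrow> bool) set \<Rightarrow> real" where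
  "rel_gen_dist r d C = Min {real (card {i. i < d \<and> (\<exists>v\<in>V. v i)}) / real d
       | V. V \<subseteq> C \<and> f2_dim_eq d V r}"

text \<open>Partial words: None plays the role of bot.\<close>
definition List_code :: "nat \<Rightarrow> (nat \<Rightarrow> bool) set \<Rightarrow> (nat \<Rightarrow> bool option) \<Rightarrow> (nat \<Rightarrow> bool) set" where
  "List_code d C w = {c \<in> C. \<forall>i<d. w i \<noteq> None \<longrightarrow> c i = the (w i)}"

definition regular_graph :: "nat \<Rightarrow> nat \<Rightarrow> (nat \<Rightarrow> nat \<Rightarrow> bool) \<Rightarrow> bool" where
  "regular_graph n d Adj \<longleftrightarrow>
     (\<forall>u v. Adj u v \<longrightarrow> u < n \<and> v < n) \<and> (\<forall>u v. Adj u v \<longrightarrow> Adj v u) \<and>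
     (\<forall>u. \<not> Adj u u) \<and> (\<forall>u<n. card {v. Adj u v} = d)"

definition adj_matrix :: "nat \<Rightarrow> (nat \<Rightarrow> nat \<Rightarrow> bool) \<Rightarrow> real mat" where
  "adj_matrix n Adj = mat n n (\<lambda>(i, j). if Adj i j then 1 else 0)"

definition adj_eigenvalues :: "nat \<Rightarrow> (nat \<Rightarrow> nat \<Rightarrow> bool) \<Rightarrow> real list" where
  "adj_eigenvalues n Adj = rev (sorted_list_of_multiset (proots (char_poly (adj_matrix n Adj))))"

definition expansion :: "nat \<Rightarrow> (nat \<Rightarrow> nat \<Rightarrow> bool) \<Rightarrow> real" where
  "expansion n Adj = (let ev = adj_eigenvalues n Adj in max (ev ! 1) \<bar>last ev\<bar>)"

text \<open>Double cover: a vertex is (v, False) in L or (v, True) in R; an edge is a pair (u, w)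
  meaning the edge between u in L and w in R, present iff Adj u w.\<close>
type_synonym dvertex = "nat \<times> bool"
type_synonym dedge = "nat \<times> nat"

definition dc_vertices :: "nat \<Rightarrow> dvertex set" where
  "dc_vertices n = {0..<n} \<times> UNIV"

definition dc_edges :: "(nat \<Rightarrow> nat \<Rightarrow> bool) \<Rightarrow> dedge set" where
  "dc_edges Adj = {(u, w). Adj u w}"

definition inc_edge :: "dvertex \<Rightarrow> nat \<Rightarrow> dedge" where
  "inc_edge x w = (if snd x then (w, fst x) else (fst x, w))"

definition endpoints :: "dedge \<Rightarrow> dvertex set" where
  "endpoints e = {(fst e, False), (snd e, True)}"

definition bad_set :: "nat \<Rightarrow> (nat \<Rightarrow> nat \<Rightarrow> bool) \<Rightarrow> real \<Rightarrow> nat \<Rightarrow> (dedge \<Rightarrow> bool option) \<Rightarrow> dvertex set" where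
  "bad_set n Adj \<delta>r d z = {x \<in> dc_vertices n.
      real (card {w. Adj (fst x) w \<and> z (inc_edge x w) = None}) > \<delta>r * real d}"

text \<open>local word at x: (z_(x,Gamma_1(x)), ..., z_(x,Gamma_d(x))), 0-indexed\<close>
definition local_word :: "(dvertex \<Rightarrow> nat \<Rightarrow> nat) \<Rightarrow> (dedge \<Rightarrow> bool option) \<Rightarrow> dvertex \<Rightarrow> nat \<Rightarrow> bool option" where
  "local_word \<Gamma> z x = (\<lambda>i. z (inc_edge x (\<Gamma> x i)))"

text \<open>the affine map y |-> G_x y + b_x, F_2^k -> F_2^d, where the row of G_x for coordinate i
  is the row indexed by the edge (x, Gamma_i(x)); rows are functions nat => bool (columns < k).\<close>
definition aff_map :: "nat \<Rightarrow> nat \<Rightarrow> (nat \<Rightarrow> dedge) \<Rightarrow> (dedge \<Rightarrow> nat \<Rightarrow> bool) \<Rightarrow> (nat \<Rightarrow> bool)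
    \<Rightarrow> (nat \<Rightarrow> bool) \<Rightarrow> (nat \<Rightarrow> bool)" where
  "aff_map d k edge_of G b y =
     (\<lambda>i. i < d \<and> (odd (card {j. j < k \<and> G (edge_of i) j \<and> y j}) \<noteq> b i))"

definition loc_equiv :: "(dvertex \<Rightarrow> dedge \<Rightarrow> nat \<Rightarrow> bool) \<Rightarrow> (dvertex \<Rightarrow> nat) \<Rightarrow> dvertex \<Rightarrow> dedge \<Rightarrow> dedge \<Rightarrow> bool" where
  "loc_equiv G rv x e e' \<longleftrightarrow> x \<in> endpoints e \<and> x \<in> endpoints e' \<and>
     (\<forall>j < rv x. G x e j = G x e' j)"

definition class_at :: "(dvertex \<Rightarrow> dedge \<Rightarrow> nat \<Rightarrow> bool) \<Rightarrow> (dvertex \<Rightarrow> nat) \<Rightarrow> dedge set \<Rightarrow> dvertex \<Rightarrow> dedge \<Rightarrow> dedge set" where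
  "class_at G rv E1 x e = {e' \<in> E1. loc_equiv G rv x e e'}"

text \<open>one removal step with threshold thr (the number eps^2 delta^2 / 2^(r+3) * d)\<close>
definition fhe_step :: "(dvertex \<Rightarrow> dedge \<Rightarrow> nat \<Rightarrow> bool) \<Rightarrow> (dvertex \<Rightarrow> nat) \<Rightarrow> real \<Rightarrow> dedge set \<Rightarrow> dedge set \<Rightarrow> bool" where
  "fhe_step G rv thr E1 E2 \<longleftrightarrow> (\<exists>e\<in>E1. \<exists>x\<in>endpoints e.
      real (card (class_at G rv E1 x e)) \<le> thr \<and> E2 = E1 - class_at G rv E1 x e)"

definition find_heavy_edges_output :: "(dvertex \<Rightarrow> dedge \<Rightarrow> nat \<Rightarrow> bool) \<Rightarrow> (dvertex \<Rightarrow> nat) \<Rightarrow> real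
    \<Rightarrow> dedge set \<Rightarrow> dvertex set \<Rightarrow> dedge set \<Rightarrow> bool" where
  "find_heavy_edges_output G rv thr E B E' \<longleftrightarrow>
     (fhe_step G rv thr)\<^sup>*\<^sup>* {e \<in> E. endpoints e \<inter> B = {}} E' \<and> (\<nexists>E''. fhe_step G rv thr E' E'')"

definition glob_step :: "(dvertex \<Rightarrow> dedge \<Rightarrow> nat \<Rightarrow> bool) \<Rightarrow> (dvertex \<Rightarrow> nat) \<Rightarrow> dedge set \<Rightarrow> dedge rel" where
  "glob_step G rv E' = {(e, e'). e \<in> E' \<and> e' \<in> E' \<and> (\<exists>x. loc_equiv G rv x e e')}"

definition glob_equiv :: "(dvertex \<Rightarrow> dedge \<Rightarrow> nat \<Rightarrow> bool) \<Rightarrow> (dvertex \<Rightarrow> nat) \<Rightarrow> dedge set \<Rightarrow> dedge rel" where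
  "glob_equiv G rv E' = Id_on E' \<union> (glob_step G rv E')\<^sup>+"

end

theory Submission
  imports Defs "Jordan_Normal_Form.Spectral_Radius"
begin

(*
  Every edge surviving FindHeavyEdges is heavy at both of its endpoints: with
  c = eps^2 delta^2 / 2^(r+4), more than 2 c d edges of E' at that endpoint are locally
  equivalent to it, and all of them lie in its global class. Hence a global class F
  whose left and right vertex sets are S and T satisfies |F| > 2 c d |S| and
  |F| > 2 c d |T|. As F is contained in E(S, T), the expander mixing lemma gives
  |F| <= d |S| |T| / n + lambda sqrt (|S| |T|) with lambda <= c d. Together these force
  sqrt (|S| |T|) > c n and so |F| > 2 c^2 d n; counting edges, there are at most
  1 / (2 c^2) classes. The mixing lemma rests on the spectral theorem for real symmetric
  matrices, proved by Householder deflation.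
*)

(* Formal power series use the same syntax $ as vector indexing. *)
no_notation fps_nth (infixl \<open>$\<close> 75)

section \<open>Orthogonal diagonalisation of real symmetric matrices\<close>

lemma real_symmetric_mat_eigenvalue_real:
  fixes A :: "real mat"
  assumes A: "A \<in> carrier_mat n n" and sym: "A\<^sup>T = A"
    and ev: "eigenvector (map_mat complex_of_real A) v e"
  shows "e \<in> \<real>"
proof -
  let ?a = "\<lambda>i j. complex_of_real (A $$ (i, j))"
  have v: "v \<in> carrier_vec n" "v \<noteq> 0\<^sub>v n" and Av: "map_mat complex_of_real A *\<^sub>v v = e \<cdot>\<^sub>v v"
    using ev A unfolding eigenvector_def by auto
  have row: "(\<Sum>j<n. ?a i j * v $ j) = e * v $ i" if "i < n" for i
  proof -
    have "(map_mat complex_of_real A *\<^sub>v v) $ i = (\<Sum>j<n. ?a i j * v $ j)"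
      using that A v by (auto simp: scalar_prod_def lessThan_atLeast0 intro!: sum.cong)
    then show ?thesis using Av that v by simp
  qed
  have a_sym: "?a j i = ?a i j" if "i < n" "j < n" for i j
    using sym A that by (metis carrier_matD index_transpose_mat(1))
  define s where "s = (\<Sum>i<n. \<Sum>j<n. ?a i j * cnj (v $ i) * v $ j)"
  define N where "N = (\<Sum>i<n. cnj (v $ i) * v $ i)"
  have "s = (\<Sum>i<n. cnj (v $ i) * (\<Sum>j<n. ?a i j * v $ j))"
    unfolding s_def by (simp add: sum_distrib_left mult_ac)
  also have "\<dots> = e * N"
    unfolding N_def using row by (simp add: sum_distrib_left mult_ac)
  finally have s_eq: "s = e * N" .
  have "cnj s = (\<Sum>i<n. \<Sum>j<n. ?a j i * cnj (v $ j) * v $ i)"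
    unfolding s_def by (auto simp: a_sym mult_ac intro!: sum.cong)
  also have "\<dots> = s"
    unfolding s_def by (rule sum.swap)
  finally have "s \<in> \<real>"
    by (simp add: Reals_cnj_iff)
  have N_real: "N = complex_of_real (\<Sum>i<n. (cmod (v $ i))\<^sup>2)"
    unfolding N_def of_real_sum
    by (rule sum.cong) (simp, subst complex_norm_square, simp add: mult.commute)
  obtain k where k: "k < n" "v $ k \<noteq> 0"
    using v by (metis carrier_vecD eq_vecI index_zero_vec)
  have "0 < (cmod (v $ k))\<^sup>2" "(cmod (v $ k))\<^sup>2 \<le> (\<Sum>i<n. (cmod (v $ i))\<^sup>2)"
    using k by (auto intro: member_le_sum)
  then have "N \<noteq> 0"
    unfolding N_real by (metis less_le_trans less_irrefl of_real_eq_0_iff)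
  moreover have "N \<in> \<real>"
    unfolding N_real by (rule Reals_of_real)
  ultimately show ?thesis
    using \<open>s \<in> \<real>\<close> s_eq by (metis Reals_divide nonzero_mult_div_cancel_right)
qed

lemma real_symmetric_mat_has_eigenvector:
  fixes A :: "real mat"
  assumes A: "A \<in> carrier_mat n n" and sym: "A\<^sup>T = A" and n: "n > 0"
  obtains e v where "eigenvector A v e"
proof -
  let ?Ac = "map_mat complex_of_real A"
  have Ac: "?Ac \<in> carrier_mat n n" using A by auto
  obtain e where "eigenvalue ?Ac e"
    using spectrum_non_empty[OF Ac n] unfolding spectrum_def by auto
  moreover from this obtain v where "eigenvector ?Ac v e"
    unfolding eigenvalue_def by auto
  then obtain e' where e': "e = complex_of_real e'"
    using real_symmetric_mat_eigenvalue_real[OF A sym] by (metis Reals_cases)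
  ultimately have "poly (map_poly complex_of_real (char_poly A)) (complex_of_real e') = 0"
    using eigenvalue_root_char_poly[OF Ac] of_real_hom.char_poly_hom[OF A] by metis
  then have "eigenvalue A e'"
    using eigenvalue_root_char_poly[OF A] by simp
  then show ?thesis
    using that unfolding eigenvalue_def by blast
qed

lemma conjugate_real_vec [simp]: "conjugate (v :: real vec) = v"
  by (rule eq_vecI) auto

lemma real_vec_self_scalar_prod_pos:
  fixes v :: "real vec"
  assumes "v \<in> carrier_vec n" and "v \<noteq> 0\<^sub>v n"
  shows "v \<bullet> v > 0"
  using conjugate_square_ge_0_vec[of v] conjugate_square_eq_0_vec[OF assms(1)] assms(2)
  by simp

(* The reflection I - 2 w w^T / (w . w); for w = 0 the junk value 2 / 0 = 0 makes it
   the identity, which is why it is an involution for every w. *)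
definition householder_mat :: "nat \<Rightarrow> real vec \<Rightarrow> real mat" where
  "householder_mat n w = mat n n (\<lambda>(i, j). (if i = j then 1 else 0) - 2 / (w \<bullet> w) * w $ i * w $ j)"

lemma householder_mat_carrier [simp]: "householder_mat n w \<in> carrier_mat n n"
  by (simp add: householder_mat_def)

lemma transpose_householder_mat [simp]: "(householder_mat n w)\<^sup>T = householder_mat n w"
  by (rule eq_matI) (auto simp: householder_mat_def)

lemma householder_mat_involutive:
  assumes w: "w \<in> carrier_vec n"
  shows "householder_mat n w * householder_mat n w = 1\<^sub>m n"
proof (rule eq_matI)
  define S where "S = w \<bullet> w"
  define c where "c = 2 / S"
  have cS: "c * c * S = 2 * c"
    unfolding c_def by (cases "S = 0") auto
  have S: "S = (\<Sum>k<n. w $ k * w $ k)"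
    unfolding S_def using w by (simp add: scalar_prod_def lessThan_atLeast0)
  fix i j assume "i < dim_row (1\<^sub>m n :: real mat)" "j < dim_col (1\<^sub>m n :: real mat)"
  then have i: "i < n" and j: "j < n" by auto
  have "(householder_mat n w * householder_mat n w) $$ (i, j)
      = (\<Sum>k<n. ((if i = k then 1 else 0) - c * w $ i * w $ k)
          * ((if k = j then 1 else 0) - c * w $ k * w $ j))"
    using i j by (simp add: householder_mat_def scalar_prod_def lessThan_atLeast0 c_def S_def)
  also have "\<dots> = (\<Sum>k<n. (if k = i then (if k = j then 1 else 0) else 0)
      - (if k = i then c * w $ k * w $ j else 0) - (if k = j then c * w $ i * w $ k else 0)
      + c * c * w $ i * w $ j * (w $ k * w $ k))"
    by (rule sum.cong) (auto simp: algebra_simps)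
  also have "\<dots> = (if i = j then 1 else 0) - 2 * c * w $ i * w $ j + c * c * S * w $ i * w $ j"
    using i j unfolding S
    by (simp add: sum.distrib sum_subtractf sum_distrib_left[symmetric] mult.assoc)
  also have "\<dots> = (1\<^sub>m n) $$ (i, j)"
    using i j by (simp add: cS)
  finally show "(householder_mat n w * householder_mat n w) $$ (i, j) = (1\<^sub>m n) $$ (i, j)" .
qed (auto simp: householder_mat_def)

lemma householder_mat_mult_unit_vec:
  assumes u: "u \<in> carrier_vec n" and uu: "u \<bullet> u = 1" and n: "0 < n"
  shows "householder_mat n (u - unit_vec n 0) *\<^sub>v unit_vec n 0 = u"
proof -
  define w where "w = u - unit_vec n 0"
  have w: "w \<in> carrier_vec n" and u_eq: "u = w + unit_vec n 0"
    using u by (auto simp: w_def intro!: eq_vecI)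
  have e0: "unit_vec n 0 \<in> carrier_vec n" by simp
  have "(w + unit_vec n 0) \<bullet> (w + unit_vec n 0)
      = w \<bullet> (w + unit_vec n 0) + unit_vec n 0 \<bullet> (w + unit_vec n 0)"
    by (rule add_scalar_prod_distrib[OF w e0]) (use w in simp)
  also have "\<dots> = (w \<bullet> w + w \<bullet> unit_vec n 0) + (unit_vec n 0 \<bullet> w + unit_vec n 0 \<bullet> unit_vec n 0)"
    by (simp only: scalar_prod_add_distrib[OF w w e0] scalar_prod_add_distrib[OF e0 w e0])
  also have "\<dots> = w \<bullet> w + 2 * w $ 0 + 1"
    using n w by simp
  finally have ww: "w \<bullet> w = - 2 * w $ 0"
    using uu unfolding u_eq by simp
  have "(householder_mat n w *\<^sub>v unit_vec n 0) $ i = u $ i" if i: "i < n" for i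
  proof (cases "w \<bullet> w = 0")
    case True
    then have "w = 0\<^sub>v n"
      using conjugate_square_eq_0_vec[OF w] by simp
    then show ?thesis
      using i n by (simp add: householder_mat_def u_eq)
  next
    case False
    then have "2 / (w \<bullet> w) * w $ 0 = -1"
      using ww by (simp add: field_simps)
    then have "2 / (w \<bullet> w) * w $ i * w $ 0 = - w $ i"
      by (metis mult.commute mult.left_commute mult_minus1_right)
    then show ?thesis
      using i n w by (simp add: householder_mat_def u_eq)
  qed
  then show ?thesis
    using u by (intro eq_vecI) (auto simp: w_def householder_mat_def)
qed

lemma real_symmetric_mat_has_unit_eigenvector:
  fixes A :: "real mat"
  assumes A: "A \<in> carrier_mat n n" and sym: "A\<^sup>T = A" and n: "n > 0"
  obtains e u where "u \<in> carrier_vec n" "u \<bullet> u = 1" "A *\<^sub>v u = e \<cdot>\<^sub>v u"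
proof -
  obtain e v where "eigenvector A v e"
    using real_symmetric_mat_has_eigenvector[OF assms] .
  then have v: "v \<in> carrier_vec n" "v \<noteq> 0\<^sub>v n" and Av: "A *\<^sub>v v = e \<cdot>\<^sub>v v"
    using A unfolding eigenvector_def by auto
  define u where "u = (1 / sqrt (v \<bullet> v)) \<cdot>\<^sub>v v"
  have "v \<bullet> v > 0"
    using real_vec_self_scalar_prod_pos[OF v] .
  then have "u \<bullet> u = 1"
    unfolding u_def using v
    by (simp add: smult_scalar_prod_distrib scalar_prod_smult_distrib[of _ n]
        real_sqrt_mult[symmetric])
  moreover have "A *\<^sub>v u = e \<cdot>\<^sub>v u"
    unfolding u_def using Av v A by (simp add: mult_mat_vec smult_smult_assoc mult.commute)
  moreover have "u \<in> carrier_vec n"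
    unfolding u_def using v by simp
  ultimately show ?thesis
    using that by blast
qed

lemma symmetric_mat_with_eigenvector_unit_vec_0:
  fixes B :: "'a :: comm_ring_1 mat"
  assumes B: "B \<in> carrier_mat (Suc m) (Suc m)" and sym: "B\<^sup>T = B"
    and eig: "B *\<^sub>v unit_vec (Suc m) 0 = e \<cdot>\<^sub>v unit_vec (Suc m) 0"
  shows "B = four_block_mat (mat 1 1 (\<lambda>_. e)) (0\<^sub>m 1 m) (0\<^sub>m m 1)
               (mat m m (\<lambda>(i, j). B $$ (Suc i, Suc j)))"
proof -
  have col0: "B $$ (i, 0) = (if i = 0 then e else 0)" if "i < Suc m" for i
    using arg_cong[OF eig, of "\<lambda>v. v $ i"] that B by auto
  have row0: "B $$ (0, j) = (if j = 0 then e else 0)" if "j < Suc m" for j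
    using col0[OF that] sym B that by (metis carrier_matD index_transpose_mat(1) zero_less_Suc)
  show ?thesis
    by (rule eq_matI) (use B col0 row0 in auto)
qed

lemma real_symmetric_mat_deflation:
  fixes A :: "real mat"
  assumes A: "A \<in> carrier_mat (Suc m) (Suc m)" and sym: "A\<^sup>T = A"
  obtains H e A' where "H \<in> carrier_mat (Suc m) (Suc m)" "H\<^sup>T = H" "H * H = 1\<^sub>m (Suc m)"
    and "A' \<in> carrier_mat m m" "A'\<^sup>T = A'"
    and "H * A * H = four_block_mat (mat 1 1 (\<lambda>_. e)) (0\<^sub>m 1 m) (0\<^sub>m m 1) A'"
proof -
  let ?n = "Suc m" and ?e0 = "unit_vec (Suc m) 0"
  obtain e u where u: "u \<in> carrier_vec ?n" "u \<bullet> u = 1" and Au: "A *\<^sub>v u = e \<cdot>\<^sub>v u"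
    using real_symmetric_mat_has_unit_eigenvector[OF A sym] by blast
  define H where "H = householder_mat ?n (u - ?e0)"
  have H: "H \<in> carrier_mat ?n ?n" and HT: "H\<^sup>T = H"
    unfolding H_def by simp_all
  have HH: "H * H = 1\<^sub>m ?n"
    unfolding H_def using u(1) by (intro householder_mat_involutive) simp
  have He0: "H *\<^sub>v ?e0 = u"
    unfolding H_def by (rule householder_mat_mult_unit_vec[OF u]) simp
  define B where "B = H * A * H"
  have B: "B \<in> carrier_mat ?n ?n"
    unfolding B_def using H A by simp
  have "B\<^sup>T = H\<^sup>T * (H * A)\<^sup>T"
    unfolding B_def by (rule transpose_mult) (use H A in auto)
  also have "(H * A)\<^sup>T = A\<^sup>T * H\<^sup>T"
    by (rule transpose_mult) (use H A in auto)
  finally have symB: "B\<^sup>T = B"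
    unfolding B_def using H A HT sym by (simp add: assoc_mult_mat[of _ ?n ?n])
  have "B *\<^sub>v ?e0 = H *\<^sub>v (A *\<^sub>v (H *\<^sub>v ?e0))"
    unfolding B_def using H A assoc_mult_mat_vec[of "H * A" ?n ?n H ?n ?e0]
      assoc_mult_mat_vec[of H ?n ?n A ?n "H *\<^sub>v ?e0"]
    by simp
  also have "\<dots> = e \<cdot>\<^sub>v ((H * H) *\<^sub>v ?e0)"
    using He0 Au H u by (simp add: mult_mat_vec assoc_mult_mat_vec[of _ ?n ?n])
  finally have "B *\<^sub>v ?e0 = e \<cdot>\<^sub>v ?e0"
    using HH by simp
  define A' where "A' = mat m m (\<lambda>(i, j). B $$ (Suc i, Suc j))"
  have block: "H * A * H = four_block_mat (mat 1 1 (\<lambda>_. e)) (0\<^sub>m 1 m) (0\<^sub>m m 1) A'"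
    using symmetric_mat_with_eigenvector_unit_vec_0[OF B symB \<open>B *\<^sub>v ?e0 = e \<cdot>\<^sub>v ?e0\<close>]
    unfolding B_def A'_def .
  have symA': "A'\<^sup>T = A'"
    unfolding A'_def
    by (rule eq_matI) (use symB B in \<open>auto, metis carrier_matD index_transpose_mat(1) Suc_less_eq\<close>)
  show ?thesis
    by (rule that[OF H HT HH _ symA' block]) (simp add: A'_def)
qed

lemma mat_diag_Suc:
  "mat_diag (Suc m) f =
     four_block_mat (mat 1 1 (\<lambda>_. f 0)) (0\<^sub>m 1 m) (0\<^sub>m m 1) (mat_diag m (\<lambda>i. f (Suc i)))"
  by (rule eq_matI) (auto simp: mat_diag_def)

lemma block_diag_mat_congruence:
  fixes P A :: "'a :: comm_ring_1 mat"
  assumes P: "P \<in> carrier_mat m m" and A: "A \<in> carrier_mat m m"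
  defines "X \<equiv> four_block_mat (1\<^sub>m 1) (0\<^sub>m 1 m) (0\<^sub>m m 1) P"
  shows "X\<^sup>T * four_block_mat (mat 1 1 (\<lambda>_. e)) (0\<^sub>m 1 m) (0\<^sub>m m 1) A * X
    = four_block_mat (mat 1 1 (\<lambda>_. e)) (0\<^sub>m 1 m) (0\<^sub>m m 1) (P\<^sup>T * A * P)"
proof -
  have XT: "X\<^sup>T = four_block_mat (1\<^sub>m 1) (0\<^sub>m 1 m) (0\<^sub>m m 1) P\<^sup>T"
    unfolding X_def using P by (simp add: transpose_four_block_mat[of _ 1 1 _ m _ m])
  have "X\<^sup>T * four_block_mat (mat 1 1 (\<lambda>_. e)) (0\<^sub>m 1 m) (0\<^sub>m m 1) A
      = four_block_mat (mat 1 1 (\<lambda>_. e)) (0\<^sub>m 1 m) (0\<^sub>m m 1) (P\<^sup>T * A)"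
    unfolding XT using P A by (subst mult_four_block_mat) auto
  then show ?thesis
    unfolding X_def using P A by (simp, subst mult_four_block_mat) auto
qed

lemma symmetric_mult_congruence:
  fixes H X A :: "'a :: comm_ring_1 mat"
  assumes H: "H \<in> carrier_mat n n" "H\<^sup>T = H"
    and X: "X \<in> carrier_mat n n" and A: "A \<in> carrier_mat n n"
  shows "(H * X)\<^sup>T * A * (H * X) = X\<^sup>T * (H * A * H) * X"
proof -
  have "(H * X)\<^sup>T = X\<^sup>T * H"
    using H X by (simp add: transpose_mult)
  then show ?thesis
    using H X A by (simp add: assoc_mult_mat[of _ n n _ n _ n])
qed

theorem real_symmetric_mat_orthogonally_diagonalizable:
  fixes A :: "real mat"
  assumes "A \<in> carrier_mat n n" and "A\<^sup>T = A"
  obtains P f where "P \<in> carrier_mat n n" "P\<^sup>T * P = 1\<^sub>m n" "P\<^sup>T * A * P = mat_diag n f"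
  using assms
proof (induction n arbitrary: A thesis)
  case 0
  show ?case
    by (rule "0.prems"(1)[of "1\<^sub>m 0" "\<lambda>_. 0"])
      (use "0.prems"(2) in \<open>auto intro!: eq_matI simp: mat_diag_def\<close>)
next
  case (Suc m)
  let ?n = "Suc m"
  obtain H e A' where H: "H \<in> carrier_mat ?n ?n" "H\<^sup>T = H" "H * H = 1\<^sub>m ?n"
    and A': "A' \<in> carrier_mat m m" "A'\<^sup>T = A'"
    and HAH: "H * A * H = four_block_mat (mat 1 1 (\<lambda>_. e)) (0\<^sub>m 1 m) (0\<^sub>m m 1) A'"
    using real_symmetric_mat_deflation[OF Suc.prems(2,3)] .
  obtain P' f' where P': "P' \<in> carrier_mat m m" "P'\<^sup>T * P' = 1\<^sub>m m"
    and D': "P'\<^sup>T * A' * P' = mat_diag m f'"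
    using Suc.IH[OF _ A'] by blast
  define X where "X = four_block_mat (1\<^sub>m 1) (0\<^sub>m 1 m) (0\<^sub>m m 1) P'"
  define f where "f i = (if i = 0 then e else f' (i - 1))" for i
  have X: "X \<in> carrier_mat ?n ?n"
    unfolding X_def using P' by auto
  have one: "mat 1 1 (\<lambda>_. 1) = (1\<^sub>m 1 :: real mat)"
    by (rule eq_matI) auto
  have "X\<^sup>T * 1\<^sub>m ?n * X = 1\<^sub>m ?n"
    using block_diag_mat_congruence[OF P'(1), of "1\<^sub>m m" 1] P'
    unfolding one by (simp add: X_def)
  then have XX: "X\<^sup>T * X = 1\<^sub>m ?n"
    using X by simp
  have XAX: "X\<^sup>T * (H * A * H) * X = mat_diag ?n f"
    unfolding HAH X_def block_diag_mat_congruence[OF P'(1) A'(1)] D' mat_diag_Suc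
    by (simp add: f_def)
  have "(H * X)\<^sup>T * (H * X) = 1\<^sub>m ?n"
    using symmetric_mult_congruence[OF H(1,2) X, of "1\<^sub>m ?n"] H X XX by simp
  moreover have "(H * X)\<^sup>T * A * (H * X) = mat_diag ?n f"
    using symmetric_mult_congruence[OF H(1,2) X Suc.prems(2)] XAX by simp
  moreover have "H * X \<in> carrier_mat ?n ?n"
    using H X by simp
  ultimately show ?case
    using Suc.prems(1) by blast
qed

lemma char_poly_mat_diag: "char_poly (mat_diag n f) = (\<Prod>a\<leftarrow>map f [0..<n]. [:- a, 1:])"
proof -
  have "upper_triangular (mat_diag n f)"
    by (auto simp: upper_triangular_def mat_diag_def)
  moreover have "diag_mat (mat_diag n f) = map f [0..<n]"
    by (rule nth_equalityI) (auto simp: diag_mat_def mat_diag_def)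
  ultimately show ?thesis
    using char_poly_upper_triangular[OF mat_diag_dim] by metis
qed

lemma proots_prod_list_linear_factors:
  "proots (\<Prod>a\<leftarrow>xs. [:- a, 1:]) = mset (xs :: 'a :: idom list)"
proof (induction xs)
  case (Cons a xs)
  have "(\<Prod>a\<leftarrow>xs. [:- a, 1:]) \<noteq> 0"
    by (auto simp: prod_list_zero_iff)
  then have "proots ([:- a, 1:] * (\<Prod>a\<leftarrow>xs. [:- a, 1:]))
      = proots [:- a, 1:] + proots (\<Prod>a\<leftarrow>xs. [:- a, 1:])"
    by (intro proots_mult) auto
  moreover have "proots [:- a, 1:] = {#a#}"
    using proots_linear_factor[of "-a"] by simp
  ultimately show ?case
    using Cons by simp
qed simp

corollary real_symmetric_mat_spectral_decomposition:
  fixes A :: "real mat"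
  assumes A: "A \<in> carrier_mat n n" and sym: "A\<^sup>T = A"
  obtains P f where "P \<in> carrier_mat n n" "P\<^sup>T * P = 1\<^sub>m n" "P * P\<^sup>T = 1\<^sub>m n"
    and "P\<^sup>T * A * P = mat_diag n f" "A = P * mat_diag n f * P\<^sup>T"
    and "proots (char_poly A) = mset (map f [0..<n])"
proof -
  obtain P f where P: "P \<in> carrier_mat n n" and PP: "P\<^sup>T * P = 1\<^sub>m n"
    and D: "P\<^sup>T * A * P = mat_diag n f"
    using real_symmetric_mat_orthogonally_diagonalizable[OF A sym] .
  have PT: "P\<^sup>T \<in> carrier_mat n n"
    using P by simp
  have PP': "P * P\<^sup>T = 1\<^sub>m n"
    using mat_mult_left_right_inverse[OF PT P PP] .
  have "P * mat_diag n f * P\<^sup>T = (P * P\<^sup>T) * A * (P * P\<^sup>T)"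
    unfolding D[symmetric] using P PT A by (simp add: assoc_mult_mat[of _ n n _ n _ n])
  then have AD: "A = P * mat_diag n f * P\<^sup>T"
    using PP' A by simp
  have "similar_mat_wit A (mat_diag n f) P P\<^sup>T"
    unfolding similar_mat_wit_def Let_def using A P PT PP PP' AD[symmetric] by auto
  then have "char_poly A = char_poly (mat_diag n f)"
    by (intro char_poly_similar) (auto simp: similar_mat_def)
  then have "proots (char_poly A) = mset (map f [0..<n])"
    by (simp only: char_poly_mat_diag proots_prod_list_linear_factors)
  then show ?thesis
    using that P PP PP' D AD by blast
qed

section \<open>Quadratic forms and the two extreme eigenvalues\<close>

lemma mat_diag_mult_vec_index:
  assumes "y \<in> carrier_vec n" and "i < n"
  shows "(mat_diag n f *\<^sub>v y) $ i = f i * y $ i"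
proof -
  have "(mat_diag n f *\<^sub>v y) $ i = (\<Sum>j<n. (if i = j then f j else 0) * y $ j)"
    using assms by (simp add: mat_diag_def scalar_prod_def lessThan_atLeast0)
  also have "\<dots> = (\<Sum>j<n. if j = i then f i * y $ i else 0)"
    by (rule sum.cong) auto
  finally show ?thesis
    using assms(2) by simp
qed

lemma real_vec_self_scalar_prod: "(y :: real vec) \<in> carrier_vec n \<Longrightarrow> y \<bullet> y = (\<Sum>i<n. (y $ i)\<^sup>2)"
  by (simp add: scalar_prod_def power2_eq_square lessThan_atLeast0)

lemma orthogonal_conj_quadratic_form:
  fixes P :: "real mat"
  assumes P: "P \<in> carrier_mat n n" and PP: "P * P\<^sup>T = 1\<^sub>m n" and x: "x \<in> carrier_vec n"
  shows "x \<bullet> ((P * mat_diag n f * P\<^sup>T) *\<^sub>v x) = (\<Sum>i<n. f i * ((P\<^sup>T *\<^sub>v x) $ i)\<^sup>2)"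
    and "x \<bullet> x = (\<Sum>i<n. ((P\<^sup>T *\<^sub>v x) $ i)\<^sup>2)"
proof -
  define y where "y = P\<^sup>T *\<^sub>v x"
  have PT: "P\<^sup>T \<in> carrier_mat n n" and y: "y \<in> carrier_vec n"
    unfolding y_def using P x by auto
  have adj: "x \<bullet> (P *\<^sub>v w) = y \<bullet> w" if "w \<in> carrier_vec n" for w
    unfolding y_def using transpose_vec_mult_scalar[OF P that x] by simp
  have "(P * mat_diag n f * P\<^sup>T) *\<^sub>v x = P *\<^sub>v (mat_diag n f *\<^sub>v y)"
    unfolding y_def using P PT x
    by (simp add: assoc_mult_mat_vec[of _ n n _ n])
  moreover have "mat_diag n f *\<^sub>v y \<in> carrier_vec n"
    using mult_mat_vec_carrier[OF mat_diag_dim y] .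
  ultimately have "x \<bullet> ((P * mat_diag n f * P\<^sup>T) *\<^sub>v x) = y \<bullet> (mat_diag n f *\<^sub>v y)"
    using adj by simp
  also have "\<dots> = (\<Sum>i<n. y $ i * (f i * y $ i))"
    unfolding scalar_prod_def using y carrier_matD(1)[OF mat_diag_dim[of n f]]
    by (simp add: lessThan_atLeast0 mat_diag_mult_vec_index del: index_mult_mat_vec)
  finally show "x \<bullet> ((P * mat_diag n f * P\<^sup>T) *\<^sub>v x) = (\<Sum>i<n. f i * ((P\<^sup>T *\<^sub>v x) $ i)\<^sup>2)"
    unfolding y_def by (simp add: power2_eq_square mult_ac)
  have "P *\<^sub>v y = x"
    unfolding y_def using P PT x PP by (simp add: assoc_mult_mat_vec[of _ n n _ n, symmetric])
  then have "x \<bullet> x = y \<bullet> y"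
    using adj[OF y] by simp
  then show "x \<bullet> x = (\<Sum>i<n. ((P\<^sup>T *\<^sub>v x) $ i)\<^sup>2)"
    unfolding y_def using real_vec_self_scalar_prod[OF y[unfolded y_def]] by simp
qed

lemma card_above_second_largest_le_1:
  fixes xs :: "'a :: linorder list"
  assumes "2 \<le> length xs"
  shows "card {i. i < length xs \<and> rev (sort xs) ! 1 < xs ! i} \<le> 1"
proof -
  let ?s = "sort xs" and ?n = "length xs"
  have mu: "rev ?s ! 1 = ?s ! (?n - 2)"
    using assms by (simp add: rev_nth numeral_2_eq_2)
  have "card {i. i < ?n \<and> rev ?s ! 1 < xs ! i} = length (filter (\<lambda>x. rev ?s ! 1 < x) xs)"
    by (simp add: length_filter_conv_card)
  also have "\<dots> = length (filter (\<lambda>x. rev ?s ! 1 < x) ?s)"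
    by (metis mset_filter mset_sort size_mset)
  also have "\<dots> = card {i. i < ?n \<and> rev ?s ! 1 < ?s ! i}"
    by (simp add: length_filter_conv_card)
  also have "\<dots> \<le> card {?n - 1}"
  proof (rule card_mono)
    show "{i. i < ?n \<and> rev ?s ! 1 < ?s ! i} \<subseteq> {?n - 1}"
    proof (intro subsetI, rule ccontr)
      fix i assume i: "i \<in> {i. i < ?n \<and> rev ?s ! 1 < ?s ! i}" and "i \<notin> {?n - 1}"
      then have "?s ! i \<le> ?s ! (?n - 2)"
        by (intro sorted_nth_mono) auto
      then show False
        using i mu by auto
    qed
  qed simp
  finally show ?thesis
    by simp
qed

lemma last_rev_sort_le:
  fixes xs :: "'a :: linorder list"
  assumes "x \<in> set xs"
  shows "last (rev (sort xs)) \<le> x"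
proof -
  have ne: "sort xs \<noteq> []"
    using assms by (metis empty_iff list.set(1) set_sort)
  obtain j where "j < length (sort xs)" "sort xs ! j = x"
    using assms by (metis in_set_conv_nth set_sort)
  then show ?thesis
    using ne sorted_nth_mono[of "sort xs" 0 j] by (simp add: last_rev hd_conv_nth)
qed

(* At most one weight exceeds mu. If one does, it is the only weight equal to d, so the
   eigenvector c is supported on that coordinate alone, and orthogonality to c makes y
   vanish there. *)
lemma weighted_sum_squares_le_second_largest:
  fixes f y c :: "nat \<Rightarrow> real"
  assumes above: "card {i. i < n \<and> \<mu> < f i} \<le> 1"
    and le: "\<And>i. i < n \<Longrightarrow> f i \<le> d"
    and eig: "\<And>i. i < n \<Longrightarrow> f i * c i = d * c i"
    and j: "j < n" "c j \<noteq> 0"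
    and orth: "(\<Sum>i<n. y i * c i) = 0"
  shows "(\<Sum>i<n. f i * (y i)\<^sup>2) \<le> \<mu> * (\<Sum>i<n. (y i)\<^sup>2)"
proof -
  have unique: "k = i" if "k < n" "\<mu> < f k" "i < n" "\<mu> < f i" for k i
    using above that card_le_Suc0_iff_eq[of "{i. i < n \<and> \<mu> < f i}"] by auto
  have fj: "f j = d"
    using eig[OF j(1)] j(2) by simp
  have "y i = 0 \<or> f i \<le> \<mu>" if i: "i < n" for i
  proof (rule disjCI)
    assume "\<not> f i \<le> \<mu>"
    then have fi: "\<mu> < f i"
      by simp
    then have "j = i"
      using unique[OF j(1) _ i fi] fj le[OF i] by linarith
    have c0: "c k = 0" if "k < n" "k \<noteq> i" for k
    proof -
      have "f k \<noteq> d"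
        using unique[OF that(1) _ i fi] that(2) fi le[OF i] by force
      then show ?thesis
        using eig[OF that(1)] by simp
    qed
    have "(\<Sum>k<n. y k * c k) = (\<Sum>k<n. if k = i then y i * c i else 0)"
      by (rule sum.cong) (auto simp: c0)
    then have "y i * c i = 0"
      using orth i by simp
    then show "y i = 0"
      using j(2) \<open>j = i\<close> by simp
  qed
  then have "(\<Sum>i<n. f i * (y i)\<^sup>2) \<le> (\<Sum>i<n. \<mu> * (y i)\<^sup>2)"
    by (intro sum_mono) (force intro: mult_right_mono)
  then show ?thesis
    by (simp add: sum_distrib_left)
qed

lemma sum_unit_vec_squares:
  assumes "i < n"
  shows "(\<Sum>k<n. g k * (unit_vec n i $ k)\<^sup>2) = (g i :: real)"
proof -
  have "(\<Sum>k<n. g k * (unit_vec n i $ k)\<^sup>2) = (\<Sum>k<n. if k = i then g i else 0)"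
    using assms by (intro sum.cong) auto
  then show ?thesis
    using assms by simp
qed

lemma orthogonal_conj_diag_le_of_quadratic_form_le:
  fixes P :: "real mat"
  assumes P: "P \<in> carrier_mat n n" and PP: "P\<^sup>T * P = 1\<^sub>m n" and PP': "P * P\<^sup>T = 1\<^sub>m n"
    and quad: "\<And>z. z \<in> carrier_vec n \<Longrightarrow> z \<bullet> ((P * mat_diag n f * P\<^sup>T) *\<^sub>v z) \<le> d * (z \<bullet> z)"
    and i: "i < n"
  shows "f i \<le> d"
proof -
  define z where "z = P *\<^sub>v unit_vec n i"
  have z: "z \<in> carrier_vec n"
    unfolding z_def using P by simp
  have "P\<^sup>T *\<^sub>v z = unit_vec n i"
    unfolding z_def using P PP by (simp add: assoc_mult_mat_vec[of _ n n _ n, symmetric])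
  then have "z \<bullet> ((P * mat_diag n f * P\<^sup>T) *\<^sub>v z) = f i" and "z \<bullet> z = 1"
    using orthogonal_conj_quadratic_form(1)[OF P PP' z, of f]
      orthogonal_conj_quadratic_form(2)[OF P PP' z] sum_unit_vec_squares[OF i]
      sum_unit_vec_squares[OF i, of "\<lambda>_. 1"] by simp_all
  then show ?thesis
    using quad[OF z] by simp
qed

lemma quadratic_form_le_second_eigenvalue:
  fixes A :: "real mat"
  assumes A: "A \<in> carrier_mat n n" and sym: "A\<^sup>T = A" and n: "2 \<le> n"
    and quad: "\<And>z. z \<in> carrier_vec n \<Longrightarrow> z \<bullet> (A *\<^sub>v z) \<le> d * (z \<bullet> z)"
    and u: "u \<in> carrier_vec n" "u \<noteq> 0\<^sub>v n" "A *\<^sub>v u = d \<cdot>\<^sub>v u"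
    and x: "x \<in> carrier_vec n" "x \<bullet> u = 0"
  shows "x \<bullet> (A *\<^sub>v x) \<le> rev (sorted_list_of_multiset (proots (char_poly A))) ! 1 * (x \<bullet> x)"
proof -
  obtain P f where P: "P \<in> carrier_mat n n" and PP: "P\<^sup>T * P = 1\<^sub>m n" and PP': "P * P\<^sup>T = 1\<^sub>m n"
    and D: "P\<^sup>T * A * P = mat_diag n f" and AD: "A = P * mat_diag n f * P\<^sup>T"
    and ev: "proots (char_poly A) = mset (map f [0..<n])"
    using real_symmetric_mat_spectral_decomposition[OF A sym] .
  have PT: "P\<^sup>T \<in> carrier_mat n n"
    using P by simp
  define c where "c = P\<^sup>T *\<^sub>v u"
  have c: "c \<in> carrier_vec n" and Pc: "P *\<^sub>v c = u"
    unfolding c_def using P PT u PP' by (auto simp: assoc_mult_mat_vec[of _ n n _ n, symmetric])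
  have "mat_diag n f *\<^sub>v c = P\<^sup>T *\<^sub>v (A *\<^sub>v (P *\<^sub>v c))"
    unfolding D[symmetric] using P PT A c by (simp add: assoc_mult_mat_vec[of _ n n _ n])
  also have "\<dots> = d \<cdot>\<^sub>v c"
    unfolding Pc u(3) using PT u by (simp add: mult_mat_vec c_def)
  finally have eig: "f i * c $ i = d * c $ i" if "i < n" for i
    using mat_diag_mult_vec_index[OF c that, of f] that c by auto
  have "c \<noteq> 0\<^sub>v n"
    using Pc u(2) P by auto
  then obtain j where j: "j < n" "c $ j \<noteq> 0"
    using c by (metis eq_vecI carrier_vecD index_zero_vec)
  define y where "y = P\<^sup>T *\<^sub>v x"
  have "y \<bullet> c = x \<bullet> u"
    unfolding y_def Pc[symmetric] using transpose_vec_mult_scalar[OF P c x(1)] .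
  then have orth: "(\<Sum>i<n. y $ i * c $ i) = 0"
    using x(2) c by (simp add: scalar_prod_def lessThan_atLeast0)
  let ?\<mu> = "rev (sort (map f [0..<n])) ! 1"
  have "{i. i < n \<and> ?\<mu> < map f [0..<n] ! i} = {i. i < n \<and> ?\<mu> < f i}"
    by auto
  then have above: "card {i. i < n \<and> ?\<mu> < f i} \<le> 1"
    using card_above_second_largest_le_1[of "map f [0..<n]"] n by simp
  have "x \<bullet> (A *\<^sub>v x) = (\<Sum>i<n. f i * (y $ i)\<^sup>2)" and "x \<bullet> x = (\<Sum>i<n. (y $ i)\<^sup>2)"
    unfolding y_def AD using orthogonal_conj_quadratic_form[OF P PP' x(1)] by simp_all
  moreover have "(\<Sum>i<n. f i * (y $ i)\<^sup>2) \<le> ?\<mu> * (\<Sum>i<n. (y $ i)\<^sup>2)"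
    using weighted_sum_squares_le_second_largest[OF above _ eig j orth]
      orthogonal_conj_diag_le_of_quadratic_form_le[OF P PP PP', of f d] quad
    unfolding AD by blast
  ultimately show ?thesis
    unfolding ev sorted_list_of_multiset_mset by simp
qed

lemma least_eigenvalue_le_quadratic_form:
  fixes A :: "real mat"
  assumes A: "A \<in> carrier_mat n n" and sym: "A\<^sup>T = A" and x: "x \<in> carrier_vec n"
  shows "last (rev (sorted_list_of_multiset (proots (char_poly A)))) * (x \<bullet> x) \<le> x \<bullet> (A *\<^sub>v x)"
proof -
  obtain P f where P: "P \<in> carrier_mat n n" and PP': "P * P\<^sup>T = 1\<^sub>m n"
    and AD: "A = P * mat_diag n f * P\<^sup>T" and ev: "proots (char_poly A) = mset (map f [0..<n])"
    using real_symmetric_mat_spectral_decomposition[OF A sym] by metis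
  define y where "y = P\<^sup>T *\<^sub>v x"
  let ?least = "last (rev (sort (map f [0..<n])))"
  have "?least * (\<Sum>i<n. (y $ i)\<^sup>2) = (\<Sum>i<n. ?least * (y $ i)\<^sup>2)"
    by (simp add: sum_distrib_left)
  also have "\<dots> \<le> (\<Sum>i<n. f i * (y $ i)\<^sup>2)"
    using last_rev_sort_le[of _ "map f [0..<n]"] by (intro sum_mono mult_right_mono) auto
  finally have bound: "?least * (\<Sum>i<n. (y $ i)\<^sup>2) \<le> (\<Sum>i<n. f i * (y $ i)\<^sup>2)" .
  have "x \<bullet> (A *\<^sub>v x) = (\<Sum>i<n. f i * (y $ i)\<^sup>2)" and "x \<bullet> x = (\<Sum>i<n. (y $ i)\<^sup>2)"
    unfolding y_def AD using orthogonal_conj_quadratic_form[OF P PP' x] by simp_all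
  with bound show ?thesis
    unfolding ev sorted_list_of_multiset_mset by simp
qed

section \<open>The expander mixing lemma\<close>

(* Proofs about adj_form drop these simp rules, which would turn its sums into
   cardinalities. *)
lemmas sum_of_bool_simps = sum_of_bool_eq sum_mult_of_bool_eq sum_of_bool_mult_eq

definition adj_form :: "nat \<Rightarrow> (nat \<Rightarrow> nat \<Rightarrow> bool) \<Rightarrow> (nat \<Rightarrow> real) \<Rightarrow> (nat \<Rightarrow> real) \<Rightarrow> real" where
  "adj_form n Adj f g = (\<Sum>i<n. \<Sum>j<n. of_bool (Adj i j) * f i * g j)"

lemma adj_form_eq_scalar_prod: "adj_form n Adj f g = vec n f \<bullet> (adj_matrix n Adj *\<^sub>v vec n g)"
proof -
  have dim: "dim_row (adj_matrix n Adj) = n"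
    by (simp add: adj_matrix_def)
  have row: "(adj_matrix n Adj *\<^sub>v vec n g) $ i = (\<Sum>j<n. (if Adj i j then 1 else 0) * g j)"
    if "i < n" for i
    using that by (simp add: adj_matrix_def scalar_prod_def lessThan_atLeast0)
  have "vec n f \<bullet> (adj_matrix n Adj *\<^sub>v vec n g)
      = (\<Sum>i<n. f i * (\<Sum>j<n. (if Adj i j then 1 else 0) * g j))"
    unfolding scalar_prod_def using dim
    by (intro sum.cong) (auto simp: lessThan_atLeast0 row simp del: index_mult_mat_vec)
  then show ?thesis
    unfolding adj_form_def of_bool_def by (simp add: sum_distrib_left mult_ac)
qed

lemma adj_form_shift:
  "adj_form n Adj (\<lambda>i. f i - a) (\<lambda>j. g j - b) = adj_form n Adj f g - b * adj_form n Adj f (\<lambda>_. 1)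
     - a * adj_form n Adj (\<lambda>_. 1) g + a * b * adj_form n Adj (\<lambda>_. 1) (\<lambda>_. 1)"
  unfolding adj_form_def
  by (simp add: algebra_simps sum.distrib sum_subtractf sum_distrib_left del: sum_of_bool_simps)

lemma adj_form_indicators:
  assumes "S \<subseteq> {..<n}" and "T \<subseteq> {..<n}"
  shows "adj_form n Adj (\<lambda>i. of_bool (i \<in> S)) (\<lambda>j. of_bool (j \<in> T))
    = real (card {(u, w). u \<in> S \<and> w \<in> T \<and> Adj u w})"
proof -
  have "adj_form n Adj (\<lambda>i. of_bool (i \<in> S)) (\<lambda>j. of_bool (j \<in> T))
      = (\<Sum>p\<in>{..<n} \<times> {..<n}. of_bool (fst p \<in> S \<and> snd p \<in> T \<and> Adj (fst p) (snd p)))"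
    unfolding adj_form_def sum.cartesian_product by (intro sum.cong) auto
  also have "\<dots> = real (card ({..<n} \<times> {..<n} \<inter> {p. fst p \<in> S \<and> snd p \<in> T \<and> Adj (fst p) (snd p)}))"
    by simp
  also have "{..<n} \<times> {..<n} \<inter> {p. fst p \<in> S \<and> snd p \<in> T \<and> Adj (fst p) (snd p)}
      = {(u, w). u \<in> S \<and> w \<in> T \<and> Adj u w}"
    using assms by auto
  finally show ?thesis .
qed

lemma sum_indicator_lessThan:
  fixes n :: nat
  assumes "S \<subseteq> {..<n}"
  shows "(\<Sum>i<n. of_bool (i \<in> S) :: real) = real (card S)"
  using assms by (simp add: inf.absorb2)

lemma sum_centered_indicator_squares_le:
  fixes n :: nat
  assumes S: "S \<subseteq> {..<n}"
  shows "(\<Sum>i<n. (of_bool (i \<in> S) - real (card S) / real n)\<^sup>2) \<le> real (card S)"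
proof (cases "n = 0")
  case False
  let ?a = "real (card S) / real n"
  have "(\<Sum>i<n. (of_bool (i \<in> S) - ?a)\<^sup>2) = (\<Sum>i<n. of_bool (i \<in> S) * (1 - 2 * ?a) + ?a\<^sup>2)"
    by (intro sum.cong) (auto simp: power2_eq_square algebra_simps)
  also have "\<dots> = real (card S) - real (card S) * real (card S) / real n"
    using False
    by (simp add: sum.distrib sum_indicator_lessThan[OF S] flip: sum_distrib_right)
      (simp add: field_simps power2_eq_square)
  also have "\<dots> \<le> real (card S)"
    by simp
  finally show ?thesis .
qed simp

lemma expansion_nonneg: "0 \<le> expansion n Adj"
  unfolding expansion_def Let_def by simp

lemma card_le_edges_between_projections:
  assumes F: "F \<subseteq> dc_edges Adj" and fin: "finite F"
  shows "card F \<le> card {(u, w). u \<in> fst ` F \<and> w \<in> snd ` F \<and> Adj u w}"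
proof (rule card_mono)
  show "finite {(u, w). u \<in> fst ` F \<and> w \<in> snd ` F \<and> Adj u w}"
    by (rule finite_subset[of _ "fst ` F \<times> snd ` F"]) (use fin in auto)
  show "F \<subseteq> {(u, w). u \<in> fst ` F \<and> w \<in> snd ` F \<and> Adj u w}"
  proof
    fix e assume "e \<in> F"
    then show "e \<in> {(u, w). u \<in> fst ` F \<and> w \<in> snd ` F \<and> Adj u w}"
      using F by (cases e) (auto simp: dc_edges_def intro: rev_image_eqI)
  qed
qed

lemma lower_bound_from_mixing:
  fixes N a b c d n :: real
  assumes Na: "2 * c * d * a < N" and Nb: "2 * c * d * b < N" and a: "0 < a" and b: "0 < b"
    and c: "0 < c" and d: "0 < d" and n: "0 < n"
    and mix: "N \<le> d * a * b / n + c * d * sqrt (a * b)"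
  shows "2 * c\<^sup>2 * d * n < N"
proof -
  define g where "g = sqrt (a * b)"
  have g: "0 < g" "g * g = a * b"
    unfolding g_def using a b by auto
  have "a * b \<le> (max a b)\<^sup>2"
    using a b by (simp add: power2_eq_square mult_mono)
  then have "g \<le> max a b"
    unfolding g_def using a b by (intro real_le_lsqrt) auto
  then have "2 * c * d * g \<le> 2 * c * d * max a b"
    using c d by (intro mult_left_mono) auto
  then have Ng: "2 * c * d * g < N"
    using Na Nb by (auto simp: max_def split: if_splits)
  then have "c * d * g < d * (g * g) / n"
    using mix g unfolding g_def by simp
  then have "c * n * (d * g) < g * (d * g)"
    using n by (simp add: field_simps)
  then have "c * n < g"
    using d g by (simp add: mult_less_cancel_right)
  then have "2 * c\<^sup>2 * d * n < 2 * c * d * g"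
    using c d by (simp add: power2_eq_square)
  with Ng show ?thesis
    by linarith
qed

context
  fixes n d :: nat and Adj :: "nat \<Rightarrow> nat \<Rightarrow> bool"
  assumes graph: "regular_graph n d Adj"
begin

lemma adj_less: "Adj u v \<Longrightarrow> u < n \<and> v < n"
  using graph unfolding regular_graph_def by blast

lemma adj_commute: "Adj u v \<longleftrightarrow> Adj v u"
  using graph unfolding regular_graph_def by blast

lemma card_neighbours: "u < n \<Longrightarrow> card {v. Adj u v} = d"
  using graph unfolding regular_graph_def by blast

lemma sum_adj_row:
  assumes "i < n"
  shows "(\<Sum>j<n. of_bool (Adj i j) :: real) = real d"
proof -
  have "{..<n} \<inter> {j. Adj i j} = {j. Adj i j}"
    using adj_less by auto
  then show ?thesis
    using card_neighbours[OF assms] by simp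
qed

lemma adj_form_commute: "adj_form n Adj g f = adj_form n Adj f g"
  unfolding adj_form_def
  by (subst sum.swap) (simp add: adj_commute mult_ac del: sum_of_bool_simps)

lemma adj_form_one_right: "adj_form n Adj f (\<lambda>_. 1) = real d * (\<Sum>i<n. f i)"
proof -
  have "adj_form n Adj f (\<lambda>_. 1) = (\<Sum>i<n. f i * (\<Sum>j<n. of_bool (Adj i j)))"
    unfolding adj_form_def
    by (simp add: sum_distrib_left mult_ac del: sum_of_bool_simps)
  also have "\<dots> = real d * (\<Sum>i<n. f i)"
    by (simp add: sum_adj_row sum_distrib_left mult.commute del: sum_of_bool_simps)
  finally show ?thesis .
qed

lemma adj_form_one_left: "adj_form n Adj (\<lambda>_. 1) g = real d * (\<Sum>j<n. g j)"
  using adj_form_commute adj_form_one_right by metis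

lemma adj_form_le_degree: "adj_form n Adj f f \<le> real d * (\<Sum>i<n. (f i)\<^sup>2)"
proof -
  have "adj_form n Adj f f \<le> (\<Sum>i<n. \<Sum>j<n. of_bool (Adj i j) * ((f i)\<^sup>2 + (f j)\<^sup>2) / 2)"
    unfolding adj_form_def
  proof (intro sum_mono)
    fix i j
    have "f i * f j \<le> ((f i)\<^sup>2 + (f j)\<^sup>2) / 2"
      using sum_squares_bound[of "f i" "f j"] by (simp add: power2_eq_square)
    then show "of_bool (Adj i j) * f i * f j \<le> of_bool (Adj i j) * ((f i)\<^sup>2 + (f j)\<^sup>2) / 2"
      by (auto simp: mult.assoc)
  qed
  also have "\<dots> = ((\<Sum>i<n. \<Sum>j<n. of_bool (Adj i j) * (f i)\<^sup>2 * 1)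
      + (\<Sum>i<n. \<Sum>j<n. of_bool (Adj i j) * 1 * (f j)\<^sup>2)) / 2"
    by (simp add: sum.distrib sum_divide_distrib[symmetric] distrib_left add_divide_distrib
        del: sum_of_bool_simps)
  also have "\<dots> = (adj_form n Adj (\<lambda>i. (f i)\<^sup>2) (\<lambda>_. 1) + adj_form n Adj (\<lambda>_. 1) (\<lambda>j. (f j)\<^sup>2)) / 2"
    unfolding adj_form_def ..
  also have "\<dots> = real d * (\<Sum>i<n. (f i)\<^sup>2)"
    by (simp add: adj_form_one_right adj_form_one_left)
  finally show ?thesis .
qed

lemma adj_matrix_symmetric: "(adj_matrix n Adj)\<^sup>T = adj_matrix n Adj"
  by (rule eq_matI) (auto simp: adj_matrix_def adj_commute)

lemma adj_matrix_mult_ones: "adj_matrix n Adj *\<^sub>v vec n (\<lambda>_. 1) = real d \<cdot>\<^sub>v vec n (\<lambda>_. 1)"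
proof (rule eq_vecI)
  fix i assume "i < dim_vec (real d \<cdot>\<^sub>v vec n (\<lambda>_. 1 :: real))"
  then have i: "i < n" by simp
  have "(adj_matrix n Adj *\<^sub>v vec n (\<lambda>_. 1)) $ i = (\<Sum>j<n. of_bool (Adj i j))"
    using i by (simp add: adj_matrix_def scalar_prod_def lessThan_atLeast0 of_bool_def)
  then show "(adj_matrix n Adj *\<^sub>v vec n (\<lambda>_. 1)) $ i = (real d \<cdot>\<^sub>v vec n (\<lambda>_. 1)) $ i"
    using i sum_adj_row[OF i] by simp
qed (simp add: adj_matrix_def)

lemma adj_form_mean_zero_bound:
  assumes n: "2 \<le> n" and f0: "(\<Sum>i<n. f i) = 0"
  shows "\<bar>adj_form n Adj f f\<bar> \<le> expansion n Adj * (\<Sum>i<n. (f i)\<^sup>2)"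
proof -
  let ?A = "adj_matrix n Adj" and ?ones = "vec n (\<lambda>_. 1 :: real)"
  let ?ev = "rev (sorted_list_of_multiset (proots (char_poly ?A)))"
  have A: "?A \<in> carrier_mat n n"
    by (simp add: adj_matrix_def)
  have quad: "z \<bullet> (?A *\<^sub>v z) \<le> real d * (z \<bullet> z)" if z: "z \<in> carrier_vec n" for z
  proof -
    have "z = vec n (\<lambda>i. z $ i)"
      using z by auto
    then show ?thesis
      using adj_form_le_degree[of "\<lambda>i. z $ i"]
        adj_form_eq_scalar_prod[of n Adj "\<lambda>i. z $ i" "\<lambda>i. z $ i"]
        real_vec_self_scalar_prod[OF z] by simp
  qed
  have ones: "?ones \<in> carrier_vec n" "?ones \<noteq> 0\<^sub>v n"
    using n by (auto simp: vec_eq_iff intro!: exI[of _ 0])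
  have orth: "vec n f \<bullet> ?ones = 0"
    using f0 by (simp add: scalar_prod_def lessThan_atLeast0)
  have form: "adj_form n Adj f f = vec n f \<bullet> (?A *\<^sub>v vec n f)"
    by (rule adj_form_eq_scalar_prod)
  have sq: "vec n f \<bullet> vec n f = (\<Sum>i<n. (f i)\<^sup>2)"
    using real_vec_self_scalar_prod[of "vec n f" n] by simp
  have upper: "adj_form n Adj f f \<le> ?ev ! 1 * (\<Sum>i<n. (f i)\<^sup>2)"
    using quadratic_form_le_second_eigenvalue[OF A adj_matrix_symmetric n quad ones
        adj_matrix_mult_ones _ orth] form sq by simp
  have lower: "last ?ev * (\<Sum>i<n. (f i)\<^sup>2) \<le> adj_form n Adj f f"
    using least_eigenvalue_le_quadratic_form[OF A adj_matrix_symmetric, of "vec n f"] form sq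
    by simp
  have lam: "expansion n Adj = max (?ev ! 1) \<bar>last ?ev\<bar>"
    by (simp add: expansion_def adj_eigenvalues_def Let_def)
  have S: "0 \<le> (\<Sum>i<n. (f i)\<^sup>2)"
    by (simp add: sum_nonneg)
  have "?ev ! 1 * (\<Sum>i<n. (f i)\<^sup>2) \<le> expansion n Adj * (\<Sum>i<n. (f i)\<^sup>2)"
    unfolding lam using S by (intro mult_right_mono) auto
  moreover have "- expansion n Adj * (\<Sum>i<n. (f i)\<^sup>2) \<le> last ?ev * (\<Sum>i<n. (f i)\<^sup>2)"
    unfolding lam using S by (intro mult_right_mono) auto
  ultimately show ?thesis
    using upper lower by (simp add: abs_le_iff)
qed

(* Polarisation: with t^2 = s and F, G = t f +- g / t, 4 f^T A g = F^T A F - G^T A G. *)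
lemma adj_form_mean_zero_bilinear_bound:
  assumes n: "2 \<le> n" and f0: "(\<Sum>i<n. f i) = 0" and g0: "(\<Sum>i<n. g i) = 0" and s: "0 < s"
  shows "adj_form n Adj f g \<le> expansion n Adj / 2 * (s * (\<Sum>i<n. (f i)\<^sup>2) + (\<Sum>i<n. (g i)\<^sup>2) / s)"
proof -
  define t where "t = sqrt s"
  have t: "0 < t" "t * t = s"
    unfolding t_def using s by auto
  define F where "F i = t * f i + g i / t" for i
  define G where "G i = t * f i - g i / t" for i
  have F0: "(\<Sum>i<n. F i) = 0" and G0: "(\<Sum>i<n. G i) = 0"
    unfolding F_def G_def
    by (simp_all add: sum.distrib sum_subtractf f0 g0 flip: sum_distrib_left sum_divide_distrib)
  have FG_pointwise: "F i * F j - G i * G j = 2 * (f i * g j) + 2 * (g i * f j)" for i j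
    unfolding F_def G_def using t(1) by (simp add: field_simps)
  have "adj_form n Adj F F - adj_form n Adj G G
      = (\<Sum>i<n. \<Sum>j<n. of_bool (Adj i j) * (F i * F j - G i * G j))"
    unfolding adj_form_def
    by (simp add: sum_subtractf algebra_simps del: sum_of_bool_simps)
  also have "\<dots> = 2 * adj_form n Adj f g + 2 * adj_form n Adj g f"
    unfolding adj_form_def FG_pointwise
    by (simp add: sum.distrib sum_distrib_left algebra_simps del: sum_of_bool_simps)
  also have "\<dots> = 4 * adj_form n Adj f g"
    using adj_form_commute[of g f] by simp
  finally have FG: "adj_form n Adj F F - adj_form n Adj G G = 4 * adj_form n Adj f g" .
  have "(\<Sum>i<n. (F i)\<^sup>2) + (\<Sum>i<n. (G i)\<^sup>2) = (\<Sum>i<n. 2 * s * (f i)\<^sup>2 + 2 * ((g i)\<^sup>2 / s))"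
    unfolding F_def G_def t(2)[symmetric] sum.distrib[symmetric]
    using t(1) by (intro sum.cong) (simp_all add: field_simps power2_eq_square)
  also have "\<dots> = 2 * (s * (\<Sum>i<n. (f i)\<^sup>2) + (\<Sum>i<n. (g i)\<^sup>2) / s)"
    by (simp add: sum.distrib sum_distrib_left sum_divide_distrib algebra_simps)
  finally have squares: "(\<Sum>i<n. (F i)\<^sup>2) + (\<Sum>i<n. (G i)\<^sup>2)
      = 2 * (s * (\<Sum>i<n. (f i)\<^sup>2) + (\<Sum>i<n. (g i)\<^sup>2) / s)" .
  have "adj_form n Adj F F \<le> expansion n Adj * (\<Sum>i<n. (F i)\<^sup>2)"
    using adj_form_mean_zero_bound[OF n F0] by simp
  moreover have "- (expansion n Adj * (\<Sum>i<n. (G i)\<^sup>2)) \<le> adj_form n Adj G G"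
    using adj_form_mean_zero_bound[OF n G0] by simp
  ultimately have "4 * adj_form n Adj f g \<le> expansion n Adj * ((\<Sum>i<n. (F i)\<^sup>2) + (\<Sum>i<n. (G i)\<^sup>2))"
    using FG by (simp add: algebra_simps)
  also have "\<dots> = 2 * (expansion n Adj * (s * (\<Sum>i<n. (f i)\<^sup>2) + (\<Sum>i<n. (g i)\<^sup>2) / s))"
    unfolding squares by simp
  finally show ?thesis
    by simp
qed

lemma adj_form_centered_indicators:
  assumes n: "0 < n" and S: "S \<subseteq> {..<n}" and T: "T \<subseteq> {..<n}"
  shows "adj_form n Adj (\<lambda>i. of_bool (i \<in> S) - real (card S) / real n)
      (\<lambda>j. of_bool (j \<in> T) - real (card T) / real n)
    = real (card {(u, w). u \<in> S \<and> w \<in> T \<and> Adj u w})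
      - real d * real (card S) * real (card T) / real n"
  unfolding adj_form_shift adj_form_indicators[OF S T] adj_form_one_right adj_form_one_left
    sum_indicator_lessThan[OF S] sum_indicator_lessThan[OF T]
  using n by (simp add: field_simps)

theorem expander_mixing_lemma:
  assumes n: "2 \<le> n" and S: "S \<subseteq> {..<n}" and T: "T \<subseteq> {..<n}"
  shows "real (card {(u, w). u \<in> S \<and> w \<in> T \<and> Adj u w})
    \<le> real d * real (card S) * real (card T) / real n
       + expansion n Adj * sqrt (real (card S) * real (card T))"
proof (cases "S = {} \<or> T = {}")
  case True
  then show ?thesis
    using expansion_nonneg[of n Adj] by auto
next
  case False
  define a where "a = real (card S)"
  define b where "b = real (card T)"
  have a: "0 < a" and b: "0 < b"
    using False finite_subset[OF S] finite_subset[OF T] by (auto simp: a_def b_def card_gt_0_iff)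
  define f where "f i = of_bool (i \<in> S) - a / real n" for i
  define g where "g j = of_bool (j \<in> T) - b / real n" for j
  have f0: "(\<Sum>i<n. f i) = 0" and g0: "(\<Sum>i<n. g i) = 0"
    unfolding f_def g_def a_def b_def using n
    by (simp_all add: sum_subtractf sum_indicator_lessThan[OF S] sum_indicator_lessThan[OF T])
  define s where "s = sqrt b / sqrt a"
  have "adj_form n Adj f g \<le> expansion n Adj / 2 * (s * (\<Sum>i<n. (f i)\<^sup>2) + (\<Sum>i<n. (g i)\<^sup>2) / s)"
    using a b by (intro adj_form_mean_zero_bilinear_bound[OF n f0 g0]) (simp add: s_def)
  also have "\<dots> \<le> expansion n Adj / 2 * (s * a + b / s)"
    using sum_centered_indicator_squares_le[OF S] sum_centered_indicator_squares_le[OF T] a b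
      expansion_nonneg[of n Adj]
    unfolding f_def g_def a_def b_def s_def
    by (intro mult_left_mono add_mono divide_right_mono) auto
  also have "s * a + b / s = 2 * sqrt (a * b)"
    using a b by (simp add: s_def field_simps real_sqrt_mult)
  finally show ?thesis
    using adj_form_centered_indicators[OF _ S T] n unfolding f_def g_def a_def b_def by simp
qed

lemma dc_edges_subset: "dc_edges Adj \<subseteq> {..<n} \<times> {..<n}"
  using adj_less unfolding dc_edges_def by auto

lemma card_dc_edges: "card (dc_edges Adj) = n * d"
proof -
  have "dc_edges Adj = (SIGMA u:{..<n}. {w. Adj u w})"
    using adj_less unfolding dc_edges_def by auto
  moreover have "finite {w. Adj u w}" for u
    using adj_less by (auto intro: finite_subset[of _ "{..<n}"])
  ultimately show ?thesis
    using card_neighbours by (simp add: card_SigmaI)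
qed

lemma adj_imp_nontrivial: "Adj u v \<Longrightarrow> 2 \<le> n \<and> 0 < d"
proof -
  assume uv: "Adj u v"
  then have "u < n" "v < n" "u \<noteq> v"
    using graph unfolding regular_graph_def by auto
  moreover have "v \<in> {w. Adj u w}" "finite {w. Adj u w}"
    using uv adj_less by (auto intro: finite_subset[of _ "{..<n}"])
  then have "0 < card {w. Adj u w}"
    by (auto simp: card_gt_0_iff)
  ultimately show ?thesis
    using card_neighbours[OF \<open>u < n\<close>] by linarith
qed

lemma heavy_edge_set_large:
  assumes F: "F \<subseteq> dc_edges Adj" "F \<noteq> {}"
    and c: "0 < c" and lam: "expansion n Adj \<le> c * real d"
    and left: "2 * c * real d * real (card (fst ` F)) < real (card F)"
    and right: "2 * c * real d * real (card (snd ` F)) < real (card F)"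
  shows "2 * c\<^sup>2 * real d * real n < real (card F)"
proof -
  let ?a = "real (card (fst ` F))" and ?b = "real (card (snd ` F))"
  obtain e where "e \<in> F"
    using F(2) by blast
  then have size: "2 \<le> n" "0 < d"
    using adj_imp_nontrivial F(1) unfolding dc_edges_def by auto
  have Fn: "F \<subseteq> {..<n} \<times> {..<n}"
    using F(1) dc_edges_subset by blast
  then have "finite F"
    by (rule finite_subset) simp
  then have a: "0 < ?a" and b: "0 < ?b"
    using F(2) by (simp_all add: card_gt_0_iff)
  have S: "fst ` F \<subseteq> {..<n}" and T: "snd ` F \<subseteq> {..<n}"
    using Fn by auto
  have "real (card F) \<le> real (card {(u, w). u \<in> fst ` F \<and> w \<in> snd ` F \<and> Adj u w})"
    using card_le_edges_between_projections[OF F(1) \<open>finite F\<close>] by simp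
  also have "\<dots> \<le> real d * ?a * ?b / real n + expansion n Adj * sqrt (?a * ?b)"
    by (rule expander_mixing_lemma[OF size(1) S T])
  also have "\<dots> \<le> real d * ?a * ?b / real n + c * real d * sqrt (?a * ?b)"
    using lam by (simp add: mult_right_mono)
  finally show ?thesis
    using lower_bound_from_mixing[OF left right a b c] size by simp
qed

end

section \<open>Global classes of FindHeavyEdges\<close>

lemma fhe_steps_subset: "(fhe_step G rv thr)\<^sup>*\<^sup>* E1 E2 \<Longrightarrow> E2 \<subseteq> E1"
  by (induction rule: rtranclp_induct) (auto simp: fhe_step_def)

lemma find_heavy_edges_output_subset: "find_heavy_edges_output G rv thr E B E' \<Longrightarrow> E' \<subseteq> E"
  unfolding find_heavy_edges_output_def using fhe_steps_subset by blast

lemma find_heavy_edges_output_heavy: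
  assumes "find_heavy_edges_output G rv thr E B E'" and "e \<in> E'" and "x \<in> endpoints e"
  shows "thr < real (card (class_at G rv E' x e))"
proof (rule ccontr)
  assume "\<not> ?thesis"
  then have "fhe_step G rv thr E' (E' - class_at G rv E' x e)"
    unfolding fhe_step_def using assms(2,3) by (intro bexI[of _ e] bexI[of _ x]) auto
  then show False
    using assms(1) unfolding find_heavy_edges_output_def by blast
qed

lemma equiv_glob_equiv: "equiv E' (glob_equiv G rv E')"
proof (rule equivI)
  have "glob_step G rv E' \<subseteq> E' \<times> E'"
    unfolding glob_step_def by auto
  from trancl_subset_Sigma[OF this] show "glob_equiv G rv E' \<subseteq> E' \<times> E'"
    unfolding glob_equiv_def by auto
  show "refl_on E' (glob_equiv G rv E')"
    unfolding glob_equiv_def refl_on_def by auto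
  have "sym (glob_step G rv E')"
    unfolding glob_step_def sym_def loc_equiv_def by auto
  from sym_trancl[OF this] show "sym (glob_equiv G rv E')"
    unfolding glob_equiv_def by (auto simp: sym_def)
  show "trans (glob_equiv G rv E')"
    unfolding glob_equiv_def trans_def by (auto intro: trancl_trans)
qed

lemma glob_class_subset: "glob_equiv G rv E' `` {e} \<subseteq> E'"
  using equiv_glob_equiv[of E' G rv] unfolding equiv_def by blast

lemma glob_class_self: "e \<in> E' \<Longrightarrow> e \<in> glob_equiv G rv E' `` {e}"
  using equiv_glob_equiv[of E' G rv] unfolding equiv_def refl_on_def by blast

lemma class_at_subset_glob_class:
  assumes "(e, e1) \<in> glob_equiv G rv E'"
  shows "class_at G rv E' x e1 \<subseteq> glob_equiv G rv E' `` {e}"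
proof
  fix e' assume e': "e' \<in> class_at G rv E' x e1"
  have "e1 \<in> E'"
    using assms glob_class_subset by blast
  then have "(e1, e') \<in> glob_equiv G rv E'"
    using e' unfolding class_at_def glob_step_def glob_equiv_def by blast
  then show "e' \<in> glob_equiv G rv E' `` {e}"
    using assms equiv_glob_equiv[of E' G rv] unfolding equiv_def trans_def by blast
qed

lemma glob_class_heavy_at_endpoint:
  assumes fhe: "find_heavy_edges_output G rv thr E B E'" and fin: "finite E"
    and e1: "(e, e1) \<in> glob_equiv G rv E'" and x: "x \<in> endpoints e1"
  shows "thr < real (card {e' \<in> glob_equiv G rv E' `` {e}. x \<in> endpoints e'})"
proof -
  have "glob_equiv G rv E' `` {e} \<subseteq> E"
    using glob_class_subset find_heavy_edges_output_subset[OF fhe] by blast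
  then have "finite {e' \<in> glob_equiv G rv E' `` {e}. x \<in> endpoints e'}"
    using fin by (auto intro: finite_subset[of _ E])
  moreover have "class_at G rv E' x e1 \<subseteq> {e' \<in> glob_equiv G rv E' `` {e}. x \<in> endpoints e'}"
    using class_at_subset_glob_class[OF e1] unfolding class_at_def loc_equiv_def by blast
  ultimately have "card (class_at G rv E' x e1)
      \<le> card {e' \<in> glob_equiv G rv E' `` {e}. x \<in> endpoints e'}"
    by (rule card_mono)
  moreover have "e1 \<in> E'"
    using e1 glob_class_subset by blast
  ultimately show ?thesis
    using find_heavy_edges_output_heavy[OF fhe _ x] by (meson of_nat_le_iff less_le_trans)
qed

lemma card_gt_mult_card_image:
  assumes fin: "finite A" and ne: "A \<noteq> {}"
    and fibres: "\<And>y. y \<in> p ` A \<Longrightarrow> t < real (card {x \<in> A. p x = y})"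
  shows "t * real (card (p ` A)) < real (card A)"
proof -
  have "card A = card (\<Union>y\<in>p ` A. {x \<in> A. p x = y})"
    by (rule arg_cong[where f = card]) auto
  also have "\<dots> = (\<Sum>y\<in>p ` A. card {x \<in> A. p x = y})"
    by (rule card_UN_disjoint) (use fin in auto)
  finally have "real (card A) = (\<Sum>y\<in>p ` A. real (card {x \<in> A. p x = y}))"
    by simp
  also have "\<dots> > (\<Sum>y\<in>p ` A. t)"
    using fin ne fibres by (intro sum_strict_mono) auto
  finally show ?thesis
    by (simp add: mult.commute)
qed

lemma glob_class_heavy_projections:
  assumes fhe: "find_heavy_edges_output G rv thr E B E'" and fin: "finite E" and e: "e \<in> E'"
  defines "Cl \<equiv> glob_equiv G rv E' `` {e}"
  shows "thr * real (card (fst ` Cl)) < real (card Cl)"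
    and "thr * real (card (snd ` Cl)) < real (card Cl)"
proof -
  have "Cl \<subseteq> E"
    unfolding Cl_def using glob_class_subset find_heavy_edges_output_subset[OF fhe] by blast
  then have finCl: "finite Cl"
    using fin finite_subset by blast
  have ne: "Cl \<noteq> {}"
    unfolding Cl_def using glob_class_self[OF e] by blast
  have heavy: "thr < real (card {e' \<in> Cl. x \<in> endpoints e'})"
    if "e1 \<in> Cl" "x \<in> endpoints e1" for e1 x
    using glob_class_heavy_at_endpoint[OF fhe fin _ that(2), of e] that(1) unfolding Cl_def by simp
  have "thr < real (card {e' \<in> Cl. fst e' = u})" if "u \<in> fst ` Cl" for u
  proof -
    have "{e' \<in> Cl. (u, False) \<in> endpoints e'} = {e' \<in> Cl. fst e' = u}"
      by (auto simp: endpoints_def)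
    with that show ?thesis
      using heavy[of _ "(u, False)"] by (force simp: endpoints_def)
  qed
  then show "thr * real (card (fst ` Cl)) < real (card Cl)"
    by (rule card_gt_mult_card_image[OF finCl ne])
  have "thr < real (card {e' \<in> Cl. snd e' = w})" if "w \<in> snd ` Cl" for w
  proof -
    have "{e' \<in> Cl. (w, True) \<in> endpoints e'} = {e' \<in> Cl. snd e' = w}"
      by (auto simp: endpoints_def)
    with that show ?thesis
      using heavy[of _ "(w, True)"] by (force simp: endpoints_def)
  qed
  then show "thr * real (card (snd ` Cl)) < real (card Cl)"
    by (rule card_gt_mult_card_image[OF finCl ne])
qed

lemma card_quotient_le:
  assumes R: "equiv A R" and fin: "finite A" and m: "0 < m"
    and classes: "\<And>x. x \<in> A \<Longrightarrow> m \<le> real (card (R `` {x}))"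
  shows "real (card (A // R)) \<le> real (card A) / m"
proof -
  have "R \<subseteq> A \<times> A"
    using R unfolding equiv_def by blast
  then have fin_classes: "\<And>X. X \<in> A // R \<Longrightarrow> finite X"
    using finite_equiv_class[OF fin] by blast
  have "card (\<Union>(A // R)) = sum card (A // R)"
    by (rule card_Union_disjoint)
      (use quotient_disj[OF R] fin_classes in \<open>auto simp: pairwise_def disjnt_def\<close>)
  then have "real (card A) = (\<Sum>X\<in>A // R. real (card X))"
    using Union_quotient[OF R] by simp
  moreover have "(\<Sum>X\<in>A // R. m) \<le> (\<Sum>X\<in>A // R. real (card X))"
    by (rule sum_mono) (use classes in \<open>auto elim!: quotientE\<close>)
  ultimately show ?thesis
    using m by (simp add: field_simps)
qed

theorem find_heavy_edges_glob_classes_large: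
  assumes graph: "regular_graph n d Adj"
    and fhe: "find_heavy_edges_output G rv (2 * c * real d) (dc_edges Adj) B E'"
    and c: "0 < c" and lam: "expansion n Adj / real d \<le> c" and e: "e \<in> E'"
  shows "2 * c\<^sup>2 * real d * real n < real (card (glob_equiv G rv E' `` {e}))"
proof (rule heavy_edge_set_large[OF graph _ _ c])
  let ?Cl = "glob_equiv G rv E' `` {e}"
  have E': "E' \<subseteq> dc_edges Adj"
    using find_heavy_edges_output_subset[OF fhe] .
  then show "?Cl \<subseteq> dc_edges Adj" "?Cl \<noteq> {}"
    using glob_class_subset glob_class_self[OF e] by blast+
  have "0 < d"
    using adj_imp_nontrivial[OF graph] e E' unfolding dc_edges_def by blast
  then show "expansion n Adj \<le> c * real d"
    using lam by (simp add: field_simps)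
  have "finite (dc_edges Adj)"
    using dc_edges_subset[OF graph] finite_subset by blast
  from glob_class_heavy_projections[OF fhe this e]
  show "2 * c * real d * real (card (fst ` ?Cl)) < real (card ?Cl)"
    and "2 * c * real d * real (card (snd ` ?Cl)) < real (card ?Cl)" .
qed

corollary find_heavy_edges_card_glob_classes:
  assumes graph: "regular_graph n d Adj"
    and fhe: "find_heavy_edges_output G rv (2 * c * real d) (dc_edges Adj) B E'"
    and c: "0 < c" and lam: "expansion n Adj / real d \<le> c"
  shows "real (card (E' // glob_equiv G rv E')) \<le> 1 / (2 * c\<^sup>2)"
proof (cases "E' = {}")
  case False
  then obtain e where e: "e \<in> E'"
    by blast
  have E': "E' \<subseteq> dc_edges Adj"
    using find_heavy_edges_output_subset[OF fhe] .
  have fin: "finite (dc_edges Adj)"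
    using dc_edges_subset[OF graph] finite_subset by blast
  have size: "2 \<le> n \<and> 0 < d"
    using adj_imp_nontrivial[OF graph] e E' unfolding dc_edges_def by blast
  then have m: "0 < 2 * c\<^sup>2 * real d * real n"
    using c by simp
  have "real (card (E' // glob_equiv G rv E')) \<le> real (card E') / (2 * c\<^sup>2 * real d * real n)"
    using find_heavy_edges_glob_classes_large[OF graph fhe c lam] m
    by (intro card_quotient_le[OF equiv_glob_equiv] finite_subset[OF E' fin])
      (auto intro: less_imp_le)
  also have "\<dots> \<le> real n * real d / (2 * c\<^sup>2 * real d * real n)"
    using card_mono[OF fin E'] card_dc_edges[OF graph] m
    by (intro divide_right_mono) (simp_all flip: of_nat_mult)
  also have "\<dots> = 1 / (2 * c\<^sup>2)"
    using size c by (simp add: field_simps)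
  finally show ?thesis .
qed simp

lemma rel_dist_pos:
  assumes code: "linear_code d C" and nonzero: "\<exists>c\<in>C. c \<noteq> zero_word"
  shows "0 < rel_dist d C"
proof -
  define W where "W = {real (card (supp d c)) / real d | c. c \<in> C \<and> c \<noteq> zero_word}"
  have "card (supp d c) \<le> d" for c
    using card_mono[of "{..<d}" "supp d c"] by (auto simp: supp_def)
  then have "W \<subseteq> (\<lambda>k. real k / real d) ` {..d}"
    unfolding W_def by auto
  then have "finite W"
    by (rule finite_subset) simp
  moreover have "W \<noteq> {}"
    using nonzero unfolding W_def by auto
  ultimately have "Min W \<in> W"
    by (rule Min_in)
  then obtain c where c: "c \<in> C" "c \<noteq> zero_word" and min: "Min W = real (card (supp d c)) / real d"
    unfolding W_def by blast
  obtain i where i: "c i"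
    using c(2) unfolding zero_word_def by auto
  have "c \<in> words d"
    using code c(1) unfolding f2_subspace_def by blast
  then have "i < d"
    using i unfolding words_def by (metis mem_Collect_eq not_le)
  then have "i \<in> supp d c" and "finite (supp d c)"
    using i unfolding supp_def by auto
  then have "0 < card (supp d c)"
    by (auto simp: card_gt_0_iff)
  then show ?thesis
    using min \<open>i < d\<close> unfolding rel_dist_def W_def[symmetric] by simp
qed

lemma two_mult_square_div_power:
  "2 * (x / (2::real)^(r+4))\<^sup>2 = x\<^sup>2 / 2^(2*r+7)"
proof -
  have "((2::real)^(r+4))\<^sup>2 = 2^((r+4)*2)"
    by (rule power_mult[symmetric])
  also have "(r+4)*2 = Suc (2*r+7)"
    by simp
  finally have "((2::real)^(r+4))\<^sup>2 = 2 * 2^(2*r+7)"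
    by (simp only: power_Suc)
  then show ?thesis
    by (simp add: power_divide)
qed

theorem lemma3p5:
  fixes r d n :: nat and C0 :: "(nat \<Rightarrow> bool) set" and \<delta> \<delta>r lam \<epsilon> :: real
    and Adj :: "nat \<Rightarrow> nat \<Rightarrow> bool" and z :: "dedge \<Rightarrow> bool option"
    and \<Gamma> :: "dvertex \<Rightarrow> nat \<Rightarrow> nat"
    and G :: "dvertex \<Rightarrow> dedge \<Rightarrow> nat \<Rightarrow> bool" and b :: "dvertex \<Rightarrow> nat \<Rightarrow> bool"
    and rv :: "dvertex \<Rightarrow> nat" and E' :: "dedge set"
  assumes r: "r \<ge> 1"
    and code: "linear_code d C0"
    and nonzero: "\<exists>c\<in>C0. c \<noteq> zero_word"
    and has_r_sub: "\<exists>V. V \<subseteq> C0 \<and> f2_dim_eq d V r"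
    and delta: "\<delta> = rel_dist d C0"
    and delta_r: "\<delta>r = rel_gen_dist r d C0"
    and graph: "regular_graph n d Adj"
    and lam: "lam = expansion n Adj"
    and eps: "\<epsilon> > 0"
    and lam_bound: "lam / real d \<le> \<epsilon>^2 * \<delta>^2 / 2^(r+4)"
    and bots: "real (card {e \<in> dc_edges Adj. z e = None}) \<le> (1 - \<epsilon>) * \<delta> * \<delta>r * real d * real n"
    and order: "\<And>x. x \<in> dc_vertices n \<Longrightarrow> bij_betw (\<Gamma> x) {0..<d} {w. Adj (fst x) w}"
    and param: "\<And>x. x \<in> dc_vertices n - bad_set n Adj \<delta>r d z \<Longrightarrow>
        b x \<in> words d \<and>
        List_code d C0 (local_word \<Gamma> z x) =
          aff_map d (rv x) (\<lambda>i. inc_edge x (\<Gamma> x i)) (G x) (b x) ` words (rv x) \<and>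
        card (List_code d C0 (local_word \<Gamma> z x)) = 2 ^ rv x"
    and fhe: "find_heavy_edges_output G rv (\<epsilon>^2 * \<delta>^2 / 2^(r+3) * real d)
               (dc_edges Adj) (bad_set n Adj \<delta>r d z) E'"
  shows "(\<forall>e\<in>E'. real (card (glob_equiv G rv E' `` {e}))
              \<ge> \<epsilon>^4 * \<delta>^4 / 2^(2*r+7) * real d * real n)
         \<and> real (card (E' // glob_equiv G rv E')) \<le> 2^(2*r+7) / (\<epsilon>^4 * \<delta>^4)"
proof -
  define c where "c = \<epsilon>^2 * \<delta>^2 / 2^(r+4)"
  have "0 < \<delta>"
    using rel_dist_pos[OF code nonzero] delta by simp
  then have c: "0 < c"
    unfolding c_def using eps by simp
  have "\<epsilon>^2 * \<delta>^2 / 2^(r+3) * real d = 2 * c * real d"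
    unfolding c_def by (simp add: power_add mult_ac)
  with fhe have fhe:
    "find_heavy_edges_output G rv (2 * c * real d) (dc_edges Adj) (bad_set n Adj \<delta>r d z) E'"
    by simp
  have lam: "expansion n Adj / real d \<le> c"
    using lam_bound unfolding lam c_def .
  have size: "\<epsilon>^4 * \<delta>^4 / 2^(2*r+7) = 2 * c\<^sup>2"
    unfolding c_def two_mult_square_div_power by (simp add: power_mult_distrib flip: power_mult)
  then have count: "2^(2*r+7) / (\<epsilon>^4 * \<delta>^4) = 1 / (2 * c\<^sup>2)"
    by (metis inverse_divide inverse_eq_divide)
  show ?thesis
    unfolding size count
    using find_heavy_edges_glob_classes_large[OF graph fhe c lam]
      find_heavy_edges_card_glob_classes[OF graph fhe c lam]
    by (auto intro: less_imp_le)
qed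

end
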